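(* Let $v$ satisfy the standing assumptions and the doubling condition with constant $D$, and $g(x)=v(1-x^{-1})$. For an integer $n\ge1$ let $c_n=\int_{1/2}^1\frac{r^n\,dv(r)}{v(r)^2}$ (Riemann–Stieltjes integral). Then there exist constants $C$ and $n_0$, depending only on $D$, such that $c_n\le \dfrac{C}{g(n)}$ for all $n\ge n_0$.
   Context: Standing assumptions: $v:[0,1)\to[1,\infty)$ is positive, increasing, continuous, $v(0)=1$, $\lim_{r\to1}v(r)=+\infty$. Doubling condition: $v(1-d)\le D\,v(1-2d)$ for all $d\in(0,1/2]$, with $D\ge1$. *)

theory Defs
  imports "HOL-Analysis.Analysis"
begin

text \<open>Stieltjes integral of f with respect to an increasing continuous integrator F
  over a compact interval [a,b], realised as the Lebesgue--Stieltjes integral with respect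
  to the measure dF (F clamped to [a,b] so that it is monotone on all of the reals).
  For continuous f and continuous increasing F this agrees with the Riemann--Stieltjes integral.\<close>
definition stieltjes_int :: "(real \<Rightarrow> real) \<Rightarrow> (real \<Rightarrow> real) \<Rightarrow> real \<Rightarrow> real \<Rightarrow> real" where
  "stieltjes_int f F a b =
     (LINT x:{a..b}|interval_measure (\<lambda>x. F (max a (min x b))). f x)"

definition stieltjes_int_to1 :: "(real \<Rightarrow> real) \<Rightarrow> (real \<Rightarrow> real) \<Rightarrow> real \<Rightarrow> real" where
  "stieltjes_int_to1 f F a = Lim (at_left 1) (\<lambda>R. stieltjes_int f F a R)"

end

theory Submission
  imports Defs
begin

(* Cut [1/2,1) at the dyadic points p_j = 1 - 2^-(j+1) and choose the scale m of n,
   i.e. 2^(m+1) \<le> n < 2^(m+2).  On the cell (p_j, p_(j+1)] the integrand is at most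
   p_(j+1)^n / v(p_j)^2, and the doubling condition gives v(p_(j+1)) \<le> D v(p_j), so each
   cell contributes at most D p_(j+1)^n (1/v(p_j) - 1/v(p_(j+1))).  Cells beyond m
   telescope to at most D/v(p_m); for cells below m the weight p_(j+1)^n \<le> exp(-2^(m-j-1))
   decays doubly exponentially and beats the factor D^(m-j) lost in comparing v(p_j) with
   v(p_m).  Finally v(1 - 1/n) \<le> v(p_(m+1)) \<le> D v(p_m). *)

definition stieltjes_measure :: "(real \<Rightarrow> real) \<Rightarrow> real \<Rightarrow> real \<Rightarrow> real measure" where
  "stieltjes_measure F a b = interval_measure (\<lambda>x. F (max a (min x b)))"

lemma sets_stieltjes_measure [simp, measurable_cong]: "sets (stieltjes_measure F a b) = sets borel"
  and space_stieltjes_measure [simp]: "space (stieltjes_measure F a b) = UNIV"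
  by (simp_all add: stieltjes_measure_def)

lemma stieltjes_int_altdef:
  "stieltjes_int f F a b = (LINT x:{a..b}|stieltjes_measure F a b. f x)"
  by (simp add: stieltjes_int_def stieltjes_measure_def)

lemma stieltjes_int_empty: "b < a \<Longrightarrow> stieltjes_int f F a b = 0"
  by (simp add: stieltjes_int_def set_lebesgue_integral_def)

lemma clamped_integrator_mono:
  fixes F :: "real \<Rightarrow> real"
  assumes "a \<le> b" "mono_on {a..b} F" "x \<le> y"
  shows "F (max a (min x b)) \<le> F (max a (min y b))"
  by (rule mono_onD[OF assms(2)]) (use assms in auto)

lemma clamped_integrator_continuous:
  fixes F :: "real \<Rightarrow> real"
  assumes "a \<le> b" "continuous_on {a..b} F"
  shows "continuous_on UNIV (\<lambda>x. F (max a (min x b)))"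
proof -
  have "continuous_on UNIV (\<lambda>x::real. max a (min x b))" by (intro continuous_intros)
  moreover have "range (\<lambda>x. max a (min x b)) \<subseteq> {a..b}" using assms(1) by auto
  ultimately show ?thesis by (rule continuous_on_compose2[OF assms(2)])
qed

definition stieltjes_nn :: "(real \<Rightarrow> real) \<Rightarrow> (real \<Rightarrow> real) \<Rightarrow> real \<Rightarrow> real \<Rightarrow> ennreal" where
  "stieltjes_nn f F a b = (\<integral>\<^sup>+x\<in>{a..b}. ennreal (f x) \<partial>stieltjes_measure F a b)"

lemma continuous_on_Icc_nn_measurable:
  fixes f :: "real \<Rightarrow> real"
  assumes "continuous_on {a..b} f"
  shows "(\<lambda>x. ennreal (f x) * indicator {a..b} x) \<in> borel_measurable borel"
proof -
  have [measurable]: "(\<lambda>x. indicator {a..b} x *\<^sub>R f x) \<in> borel_measurable borel"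
    by (rule borel_measurable_continuous_on_indicator) (simp_all add: assms)
  have "(\<lambda>x. ennreal (f x) * indicator {a..b} x) = (\<lambda>x. ennreal (indicator {a..b} x *\<^sub>R f x))"
    by (auto split: split_indicator)
  also have "\<dots> \<in> borel_measurable borel" by measurable
  finally show ?thesis .
qed

lemma find_interval:
  fixes p :: "nat \<Rightarrow> 'a::linorder"
  shows "p 0 < x \<Longrightarrow> x \<le> p J \<Longrightarrow> \<exists>j<J. p j < x \<and> x \<le> p (Suc j)"
proof (induction J)
  case (Suc J)
  then show ?case by (cases "x \<le> p J") (auto intro: less_SucI)
qed simp

locale stieltjes_integrator =
  fixes F :: "real \<Rightarrow> real" and a b :: real
  assumes le: "a \<le> b" and mono: "mono_on {a..b} F" and cont: "continuous_on {a..b} F"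
begin

lemma emeasure_Ioc:
  "emeasure (stieltjes_measure F a b) {x<..y} =
     (if x \<le> y then F (max a (min y b)) - F (max a (min x b)) else 0)"
  unfolding stieltjes_measure_def
  using clamped_integrator_continuous[OF le cont]
  by (intro emeasure_interval_measure_Ioc_eq clamped_integrator_mono[OF le mono])
     (auto simp: continuous_on_eq_continuous_within intro: continuous_within_subset)

lemma emeasure_Icc: "x \<le> y \<Longrightarrow>
    emeasure (stieltjes_measure F a b) {x..y} = F (max a (min y b)) - F (max a (min x b))"
  unfolding stieltjes_measure_def
  by (intro emeasure_interval_measure_Icc clamped_integrator_mono[OF le mono]
      clamped_integrator_continuous[OF le cont])

lemma emeasure_singleton: "emeasure (stieltjes_measure F a b) {x} = 0"
  using emeasure_Icc[of x x] by simp

lemma restrict: "a \<le> c \<Longrightarrow> c \<le> b \<Longrightarrow> stieltjes_integrator F a c"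
  by unfold_locales (auto intro: mono_on_subset[OF mono] continuous_on_subset[OF cont])

(* Lowering the upper limit from b to c only cuts dF down to (a,c]; this is what makes the
   truncated integrals monotone in the upper limit. *)
lemma measure_restrict:
  assumes c: "a \<le> c" "c \<le> b"
  shows "stieltjes_measure F a c = density (stieltjes_measure F a b) (indicator {a<..c})"
proof (rule measure_eqI_generator_eq[where \<Omega>=UNIV and E="range (\<lambda>(x, y). {x<..y::real})"
      and A="\<lambda>i. {-real i<..real i}"])
  interpret c: stieltjes_integrator F a c by (rule restrict[OF c])
  fix X assume "X \<in> range (\<lambda>(x, y). {x<..y::real})"
  then obtain x y where X: "X = {x<..y}" by auto
  have "emeasure (density (stieltjes_measure F a b) (indicator {a<..c})) X
      = emeasure (stieltjes_measure F a b) (X \<inter> {a<..c})"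
    by (simp add: X emeasure_restricted Int_commute)
  also have "X \<inter> {a<..c} = {max x a<..max a (min y c)}" by (auto simp: X)
  also have "emeasure (stieltjes_measure F a b) {max x a<..max a (min y c)} =
      emeasure (stieltjes_measure F a c) X"
    unfolding X emeasure_Ioc c.emeasure_Ioc using c by (auto simp: max_def min_def)
  finally show "emeasure (stieltjes_measure F a c) X =
      emeasure (density (stieltjes_measure F a b) (indicator {a<..c})) X" ..
next
  interpret c: stieltjes_integrator F a c by (rule restrict[OF c])
  show "emeasure (stieltjes_measure F a c) {- real i<..real i} \<noteq> \<infinity>" for i
    by (simp add: c.emeasure_Ioc)
next
  show "(\<Union>i. {-real i<..real i}) = UNIV"
  proof safe
    fix x :: real
    obtain i where "\<bar>x\<bar> < real i" using reals_Archimedean2 by blast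
    then show "x \<in> (\<Union>i. {-real i<..real i})" by (auto simp: abs_less_iff intro!: exI[of _ i])
  qed auto
qed (auto simp: Int_stable_def borel_sigma_sets_Ioc)

(* Continuous integrands have finite integral, since dF([a,b]) = F b - F a. *)
lemma stieltjes_nn_finite:
  assumes "continuous_on {a..b} f"
  shows "stieltjes_nn f F a b < \<infinity>"
proof -
  obtain M where M: "\<And>x. x \<in> {a..b} \<Longrightarrow> norm (f x) \<le> M"
    using compact_imp_bounded[OF compact_continuous_image[OF assms compact_Icc]]
    unfolding bounded_iff by fastforce
  have "stieltjes_nn f F a b \<le> (\<integral>\<^sup>+x. ennreal M * indicator {a..b} x \<partial>stieltjes_measure F a b)"
    unfolding stieltjes_nn_def
  proof (intro nn_integral_mono)
    show "ennreal (f x) * indicator {a..b} x \<le> ennreal M * indicator {a..b} x" for x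
      using M[of x] by (cases "x \<in> {a..b}") (auto intro!: ennreal_leI)
  qed
  also have "\<dots> = ennreal M * emeasure (stieltjes_measure F a b) {a..b}"
    by (simp add: nn_integral_cmult_indicator)
  also have "\<dots> < \<infinity>" using le by (simp add: emeasure_Icc ennreal_mult_less_top)
  finally show ?thesis .
qed

lemma stieltjes_int_eq_nn:
  assumes "continuous_on {a..b} f" and "\<And>x. x \<in> {a..b} \<Longrightarrow> 0 \<le> f x"
  shows "stieltjes_int f F a b = enn2real (stieltjes_nn f F a b)"
proof -
  have meas: "(\<lambda>x. indicator {a..b} x *\<^sub>R f x) \<in> borel_measurable (stieltjes_measure F a b)"
    unfolding measurable_cong_sets[OF sets_stieltjes_measure refl]
    by (rule borel_measurable_continuous_on_indicator) (simp_all add: assms(1))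
  have "stieltjes_int f F a b = integral\<^sup>L (stieltjes_measure F a b) (\<lambda>x. indicator {a..b} x *\<^sub>R f x)"
    by (simp add: stieltjes_int_altdef set_lebesgue_integral_def)
  also have "\<dots> = enn2real (\<integral>\<^sup>+x. ennreal (indicator {a..b} x *\<^sub>R f x) \<partial>stieltjes_measure F a b)"
    using assms(2) by (intro integral_eq_nn_integral AE_I2 meas) (auto split: split_indicator)
  also have "(\<integral>\<^sup>+x. ennreal (indicator {a..b} x *\<^sub>R f x) \<partial>stieltjes_measure F a b) = stieltjes_nn f F a b"
    unfolding stieltjes_nn_def by (intro nn_integral_cong) (auto split: split_indicator)
  finally show ?thesis .
qed

lemma stieltjes_nn_mono:
  assumes c: "a \<le> c" "c \<le> b" and f: "continuous_on {a..c} f"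
  shows "stieltjes_nn f F a c \<le> stieltjes_nn f F a b"
proof -
  have "stieltjes_nn f F a c =
      (\<integral>\<^sup>+x. ennreal (f x) * indicator {a..c} x \<partial>density (stieltjes_measure F a b) (indicator {a<..c}))"
    unfolding stieltjes_nn_def measure_restrict[OF c] ..
  also have "\<dots> = (\<integral>\<^sup>+x. indicator {a<..c} x * (ennreal (f x) * indicator {a..c} x) \<partial>stieltjes_measure F a b)"
    by (intro nn_integral_density)
       (simp_all add: measurable_cong_sets[OF sets_stieltjes_measure refl]
         continuous_on_Icc_nn_measurable[OF f])
  also have "\<dots> \<le> stieltjes_nn f F a b"
    unfolding stieltjes_nn_def using c by (intro nn_integral_mono) (auto split: split_indicator)
  finally show ?thesis .
qed

lemma stieltjes_int_mono:
  assumes c: "a \<le> c" "c \<le> b"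
    and f: "continuous_on {a..b} f" "\<And>x. x \<in> {a..b} \<Longrightarrow> 0 \<le> f x"
  shows "stieltjes_int f F a c \<le> stieltjes_int f F a b"
proof -
  interpret c: stieltjes_integrator F a c by (rule restrict[OF c])
  have fc: "continuous_on {a..c} f" by (rule continuous_on_subset[OF f(1)]) (use c in auto)
  have "stieltjes_int f F a c = enn2real (stieltjes_nn f F a c)"
    using c f(2) by (intro c.stieltjes_int_eq_nn fc) auto
  also have "\<dots> \<le> enn2real (stieltjes_nn f F a b)"
    using stieltjes_nn_finite[OF f(1)] by (intro enn2real_mono stieltjes_nn_mono[OF c fc]) simp
  also have "\<dots> = stieltjes_int f F a b" by (intro stieltjes_int_eq_nn[symmetric] f)
  finally show ?thesis .
qed

(* Upper Darboux-type bound: if f is at most c j on the j-th cell of a partition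
   a = p 0 \<le> p 1 \<le> ... \<le> p J covering [a,b], the integral is at most the
   correspondingly weighted sum of increments of F (the endpoint a is a null set). *)
lemma stieltjes_nn_le_step_sum:
  fixes p c :: "nat \<Rightarrow> real"
  assumes p: "p 0 = a" "mono p" "b \<le> p J" and c: "\<And>j. 0 \<le> c j"
    and f_le: "\<And>j x. j < J \<Longrightarrow> x \<in> {a..b} \<Longrightarrow> p j < x \<Longrightarrow> x \<le> p (Suc j) \<Longrightarrow> f x \<le> c j"
  shows "stieltjes_nn f F a b \<le> ennreal (\<Sum>j<J. c j * (F (min (p (Suc j)) b) - F (min (p j) b)))"
proof -
  let ?M = "stieltjes_measure F a b"
  have pa: "a \<le> p j" for j using p(1) monoD[OF p(2), of 0 j] by simp
  have incr: "F (min (p j) b) \<le> F (min (p (Suc j)) b)" for j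
    using pa[of j] le monoD[OF p(2), of j "Suc j"] by (intro mono_onD[OF mono]) auto
  have cell: "emeasure ?M {p j<..p (Suc j)} = F (min (p (Suc j)) b) - F (min (p j) b)" for j
    using pa[of j] pa[of "Suc j"] le monoD[OF p(2), of j "Suc j"] by (simp add: emeasure_Ioc)
  have "AE x in ?M. x \<noteq> a"
    by (rule AE_I[where N="{a}"]) (auto simp: emeasure_singleton)
  then have "stieltjes_nn f F a b \<le> (\<integral>\<^sup>+x. (\<Sum>j<J. ennreal (c j) * indicator {p j<..p (Suc j)} x) \<partial>?M)"
    unfolding stieltjes_nn_def
  proof (rule nn_integral_mono_AE[OF AE_mp], intro AE_I2 impI)
    fix x assume "x \<noteq> a"
    show "ennreal (f x) * indicator {a..b} x \<le> (\<Sum>j<J. ennreal (c j) * indicator {p j<..p (Suc j)} x)"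
    proof (cases "x \<in> {a..b}")
      case True
      with \<open>x \<noteq> a\<close> p obtain j where j: "j < J" "p j < x" "x \<le> p (Suc j)"
        using find_interval[of p x J] by fastforce
      have "ennreal (f x) * indicator {a..b} x \<le> ennreal (c j) * indicator {p j<..p (Suc j)} x"
        using True j f_le[OF j(1) True j(2,3)] by (simp add: ennreal_leI)
      also have "\<dots> \<le> (\<Sum>j<J. ennreal (c j) * indicator {p j<..p (Suc j)} x)"
        using j(1) by (intro member_le_sum) auto
      finally show ?thesis .
    qed simp
  qed
  also have "\<dots> = (\<Sum>j<J. ennreal (c j) * emeasure ?M {p j<..p (Suc j)})"
    by (subst nn_integral_sum) (simp_all add: nn_integral_cmult_indicator)
  also have "\<dots> = ennreal (\<Sum>j<J. c j * (F (min (p (Suc j)) b) - F (min (p j) b)))"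
    using c incr by (simp add: cell ennreal_mult sum_nonneg flip: sum_ennreal)
  finally show ?thesis .
qed

end

(* A nondecreasing function bounded by B on (-\<infinity>,b) has its left limit at b (which exists)
   bounded by B; needed because Lim is only meaningful for convergent functions. *)
lemma Lim_at_left_le_bound:
  fixes g :: "real \<Rightarrow> real"
  assumes mono: "\<And>x y. x \<le> y \<Longrightarrow> y < b \<Longrightarrow> g x \<le> g y"
    and bound: "\<And>x. x < b \<Longrightarrow> g x \<le> B"
  shows "Lim (at_left b) g \<le> B"
proof -
  have "(g \<longlongrightarrow> Sup (g ` ({..<b} \<inter> UNIV))) (at b within ({..<b} \<inter> UNIV))"
    by (rule Lim_left_bound[where K=B]) (auto intro: mono bound)
  then have lim: "(g \<longlongrightarrow> Sup (g ` {..<b})) (at_left b)" by simp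
  have "Lim (at_left b) g = Sup (g ` {..<b})" by (rule tendsto_Lim[OF _ lim]) simp
  also have "\<dots> \<le> B"
  proof (rule tendsto_upperbound[OF lim _ trivial_limit_at_left_real])
    show "\<forall>\<^sub>F x in at_left b. g x \<le> B"
      unfolding eventually_at_filter by (intro always_eventually allI impI bound) simp
  qed
  finally show ?thesis .
qed

lemma stieltjes_int_to1_le:
  fixes f F :: "real \<Rightarrow> real"
  assumes "a < 1" and F: "mono_on {a..<1} F" "continuous_on {a..<1} F"
    and f: "continuous_on {a..<1} f" "\<And>x. x \<in> {a..<1} \<Longrightarrow> 0 \<le> f x"
    and bound: "\<And>R. a \<le> R \<Longrightarrow> R < 1 \<Longrightarrow> stieltjes_int f F a R \<le> B"
  shows "stieltjes_int_to1 f F a \<le> B"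
proof -
  have integrator: "stieltjes_integrator F a R" if "a \<le> R" "R < 1" for R
    using that by unfold_locales (auto intro: mono_on_subset[OF F(1)] continuous_on_subset[OF F(2)])
  have f_R: "continuous_on {a..R} f" "\<And>x. x \<in> {a..R} \<Longrightarrow> 0 \<le> f x" if "R < 1" for R
    using that by (auto intro: continuous_on_subset[OF f(1)] f(2))
  have nonneg: "0 \<le> stieltjes_int f F a R" if "R < 1" for R
  proof (cases "R < a")
    case False
    then show ?thesis
      using stieltjes_integrator.stieltjes_int_eq_nn[OF integrator f_R] that by simp
  qed (simp add: stieltjes_int_empty)
  show ?thesis
    unfolding stieltjes_int_to1_def
  proof (rule Lim_at_left_le_bound)
    fix R R' :: real assume R: "R \<le> R'" "R' < 1"
    show "stieltjes_int f F a R \<le> stieltjes_int f F a R'"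
    proof (cases "R < a")
      case False
      with R show ?thesis
        by (intro stieltjes_integrator.stieltjes_int_mono[of F a R'] integrator f_R) auto
    qed (use nonneg R in \<open>simp add: stieltjes_int_empty\<close>)
  next
    fix R :: real assume "R < 1"
    then show "stieltjes_int f F a R \<le> B"
      using bound[OF order.refl \<open>a < 1\<close>] nonneg[OF \<open>a < 1\<close>]
      by (cases "R < a") (auto simp: stieltjes_int_empty intro: bound)
  qed
qed

(* The series \<Sum>k D^(k+1) exp(-2^k) absorbs the loss D^(m-j) against the decay exp(-2^(m-j-1)). *)
definition dyadic_weight :: "real \<Rightarrow> nat \<Rightarrow> real" where
  "dyadic_weight D k = D ^ (k + 1) * exp (- (2 ^ k))"

lemma dyadic_weight_nonneg: "0 \<le> D \<Longrightarrow> 0 \<le> dyadic_weight D k"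
  by (simp add: dyadic_weight_def)

lemma summable_dyadic_weight:
  assumes "0 \<le> D"
  shows "summable (dyadic_weight D)"
proof -
  obtain N where N: "2 * D < 2 ^ N" using real_arch_pow[of 2 "2 * D"] by auto
  show ?thesis
  proof (rule summable_ratio_test[of "1/2" N])
    fix k assume k: "N \<le> k"
    have "2 * D < 2 ^ k" using N power_increasing[OF k, of "2::real"] by linarith
    also have "(2::real) ^ k \<le> exp (2 ^ k)" using exp_ge_add_one_self[of "2 ^ k"] by linarith
    finally have ratio: "D * exp (- (2 ^ k)) \<le> 1/2" by (simp add: exp_minus field_simps)
    have "dyadic_weight D (Suc k) = dyadic_weight D k * (D * exp (- (2 ^ k)))"
      by (simp add: dyadic_weight_def field_simps flip: exp_add)
    also have "\<dots> \<le> dyadic_weight D k * (1/2)"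
      by (intro mult_left_mono ratio dyadic_weight_nonneg assms)
    finally show "norm (dyadic_weight D (Suc k)) \<le> 1/2 * norm (dyadic_weight D k)"
      using dyadic_weight_nonneg[OF assms] by simp
  qed simp
qed

lemma doubling_iterate:
  fixes V :: "nat \<Rightarrow> real"
  assumes "0 \<le> D" and "\<And>j. 0 \<le> V j" and "\<And>j. V (Suc j) \<le> D * V j" and "j \<le> k"
  shows "V k \<le> D ^ (k - j) * V j"
  using assms(4)
proof (induction k rule: dec_induct)
  case (step k)
  have "V (Suc k) \<le> D * V k" by (rule assms(3))
  also have "\<dots> \<le> D * (D ^ (k - j) * V j)" using step assms(1) by (intro mult_left_mono) auto
  finally show ?case using step(1) by (simp add: Suc_diff_le)
qed simp

lemma increment_le_reciprocal_drop:
  fixes x y D w :: real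
  assumes "1 \<le> x" "x \<le> y" "y \<le> D * x" "0 \<le> w"
  shows "w / x\<^sup>2 * (y - x) \<le> D * (w * (1/x - 1/y))"
proof -
  have "1 / x\<^sup>2 \<le> D / (x * y)"
    using assms(1-3) by (simp add: divide_simps power2_eq_square mult.commute mult_left_mono)
  then have "w * (y - x) * (1 / x\<^sup>2) \<le> w * (y - x) * (D / (x * y))"
    using assms by (intro mult_left_mono) auto
  also have "w * (y - x) * (D / (x * y)) = D * (w * (1/x - 1/y))"
    using assms(1,2) by (simp add: field_simps)
  finally show ?thesis by simp
qed

(* Cells below the scale m: the doubly exponential decay of w beats the factor D^(m-j). *)
lemma doubling_sum_head_bound:
  fixes V w :: "nat \<Rightarrow> real"
  assumes D: "1 \<le> D" and V: "\<And>j. 1 \<le> V j" "\<And>j. V (Suc j) \<le> D * V j"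
    and w: "\<And>j. 0 \<le> w j" "\<And>j. j < m \<Longrightarrow> w j \<le> exp (- (2 ^ (m - Suc j)))"
  shows "(\<Sum>j<m. w j * (1 / V j - 1 / V (Suc j))) \<le> suminf (dyadic_weight D) / V m"
proof -
  have "w j * (1 / V j - 1 / V (Suc j)) \<le> dyadic_weight D (m - Suc j) / V m" if j: "j < m" for j
  proof -
    have V0: "0 < V i" for i using V(1)[of i] by linarith
    have "w j * (1 / V j - 1 / V (Suc j)) \<le> w j * (1 / V j)"
      using w(1)[of j] V0[of "Suc j"] by (intro mult_left_mono) auto
    also have "1 / V j \<le> D ^ (m - j) / V m"
      using doubling_iterate[of D V j m] D V j V0[of j] V0[of m] less_imp_le[OF V0]
      by (simp add: divide_simps mult.commute)
    then have "w j * (1 / V j) \<le> w j * (D ^ (m - j) / V m)" by (rule mult_left_mono) (rule w(1))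
    also have "\<dots> \<le> exp (- (2 ^ (m - Suc j))) * (D ^ (m - j) / V m)"
      using w(2)[OF j] V0[of m] D by (intro mult_right_mono) auto
    also have "\<dots> = dyadic_weight D (m - Suc j) / V m"
      using j by (simp add: dyadic_weight_def Suc_diff_Suc)
    finally show ?thesis .
  qed
  then have "(\<Sum>j<m. w j * (1 / V j - 1 / V (Suc j))) \<le> (\<Sum>j<m. dyadic_weight D (m - Suc j) / V m)"
    by (intro sum_mono) simp
  also have "\<dots> = (\<Sum>k<m. dyadic_weight D k) / V m"
    using sum.nat_diff_reindex[of "\<lambda>k. dyadic_weight D k / V m" m] by (simp add: sum_divide_distrib)
  also have "\<dots> \<le> suminf (dyadic_weight D) / V m"
    using D V(1)[of m]
    by (intro divide_right_mono sum_le_suminf summable_dyadic_weight dyadic_weight_nonneg) auto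
  finally show ?thesis .
qed

(* Cells from the scale m on: the sum telescopes. *)
lemma doubling_sum_tail_bound:
  fixes V w :: "nat \<Rightarrow> real"
  assumes V: "\<And>j. 1 \<le> V j" "\<And>j. V j \<le> V (Suc j)"
    and w: "\<And>j. 0 \<le> w j" "\<And>j. w j \<le> 1" and "m \<le> J"
  shows "(\<Sum>j\<in>{m..<J}. w j * (1 / V j - 1 / V (Suc j))) \<le> 1 / V m"
proof -
  have drop: "0 \<le> 1 / V j - 1 / V (Suc j)" for j
    using V(1)[of j] V(2)[of j] by (simp add: frac_le)
  have "(\<Sum>j\<in>{m..<J}. w j * (1 / V j - 1 / V (Suc j))) \<le> (\<Sum>j\<in>{m..<J}. 1 / V j - 1 / V (Suc j))"
    using w drop by (intro sum_mono mult_left_le_one_le) auto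
  also have "\<dots> = 1 / V m - 1 / V J"
    using \<open>m \<le> J\<close> by (induction J rule: dec_induct) (simp_all add: sum.atLeastLessThan_Suc)
  also have "\<dots> \<le> 1 / V m" using V(1)[of J] by simp
  finally show ?thesis .
qed

lemma doubling_sum_bound:
  fixes V w :: "nat \<Rightarrow> real"
  assumes D: "1 \<le> D"
    and V: "\<And>j. 1 \<le> V j" "\<And>j. V j \<le> V (Suc j)" "\<And>j. V (Suc j) \<le> D * V j"
    and w: "\<And>j. 0 \<le> w j" "\<And>j. w j \<le> 1" "\<And>j. j < m \<Longrightarrow> w j \<le> exp (- (2 ^ (m - Suc j)))"
    and "m \<le> J"
  shows "(\<Sum>j<J. w j / (V j)\<^sup>2 * (V (Suc j) - V j)) \<le> D * (1 + suminf (dyadic_weight D)) / V m"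
proof -
  let ?S = "suminf (dyadic_weight D)" and ?g = "\<lambda>j. w j * (1 / V j - 1 / V (Suc j))"
  have "(\<Sum>j<J. w j / (V j)\<^sup>2 * (V (Suc j) - V j)) \<le> (\<Sum>j<J. D * ?g j)"
    by (intro sum_mono increment_le_reciprocal_drop V w)
  also have "\<dots> = D * ((\<Sum>j<m. ?g j) + (\<Sum>j\<in>{m..<J}. ?g j))"
    using sum.atLeastLessThan_concat[of 0 m J ?g] \<open>m \<le> J\<close>
    by (simp add: sum_distrib_left atLeast0LessThan)
  also have "\<dots> \<le> D * (?S / V m + 1 / V m)"
    using D by (intro mult_left_mono add_mono doubling_sum_head_bound doubling_sum_tail_bound V w \<open>m \<le> J\<close>) auto
  also have "\<dots> = D * (1 + ?S) / V m" by (simp add: add_divide_distrib algebra_simps)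
  finally show ?thesis .
qed

definition dyadic_pt :: "nat \<Rightarrow> real" where
  "dyadic_pt j = 1 - 1 / 2 ^ (j + 1)"

lemma dyadic_pt_0 [simp]: "dyadic_pt 0 = 1/2"
  by (simp add: dyadic_pt_def)

lemma dyadic_pt_lt_1: "dyadic_pt j < 1"
  by (simp add: dyadic_pt_def)

lemma mono_dyadic_pt: "mono dyadic_pt"
  by (rule monoI) (simp add: dyadic_pt_def field_simps)

lemma dyadic_pt_ge_half: "1/2 \<le> dyadic_pt j"
  using monoD[OF mono_dyadic_pt, of 0 j] by simp

lemma dyadic_pt_Suc: "dyadic_pt (Suc j) = 1 - 1 / 2 ^ (j + 2)"
  by (simp add: dyadic_pt_def)

lemma dyadic_pt_exhausts:
  assumes "R < 1"
  obtains J where "m \<le> J" "R \<le> dyadic_pt J"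
proof -
  obtain k where k: "1 / (1 - R) < 2 ^ k" using real_arch_pow[of 2 "1 / (1 - R)"] by auto
  have "1 / 2 ^ (k + m + 1) \<le> (1 / 2 ^ k :: real)"
    by (intro divide_left_mono power_increasing) auto
  also have "\<dots> < 1 - R" using k assms by (simp add: field_simps)
  finally have "1 / 2 ^ (k + m + 1) < 1 - R" .
  then show ?thesis by (intro that[of "k + m"]) (auto simp: dyadic_pt_def)
qed

lemma dyadic_pt_power_decay:
  assumes "2 ^ (m + 1) \<le> n" "j < m"
  shows "dyadic_pt (Suc j) ^ n \<le> exp (- (2 ^ (m - Suc j)))"
proof -
  define x :: real where "x = 1 / 2 ^ (j + 2)"
  have "(1::real) \<le> 2 ^ (j + 2)" by (rule one_le_power) simp
  then have x: "0 \<le> x" "x \<le> 1" by (simp_all add: x_def)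
  have "dyadic_pt (Suc j) ^ n \<le> exp (- x) ^ n"
    using exp_ge_add_one_self[of "- x"] x by (intro power_mono) (auto simp: dyadic_pt_Suc x_def)
  also have "\<dots> = exp (- (real n * x))" by (simp flip: exp_of_nat_mult)
  also have "\<dots> \<le> exp (- (2 ^ (m - Suc j)))"
  proof -
    have "m - Suc j + (j + 2) = m + 1" using assms(2) by simp
    then have "(2::real) ^ (m - Suc j) * 2 ^ (j + 2) = 2 ^ (m + 1)" by (metis power_add)
    also have "\<dots> \<le> real n" using assms(1) by (metis of_nat_le_iff of_nat_numeral of_nat_power)
    finally show ?thesis by (simp add: x_def field_simps)
  qed
  finally show ?thesis .
qed

lemma dyadic_scale:
  fixes n :: nat
  assumes "2 \<le> n"
  obtains m where "2 ^ (m + 1) \<le> n" "n < 2 ^ (m + 2)"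
proof -
  obtain k where k: "2 ^ k \<le> n" "n < 2 ^ (k + 1)" using ex_power_ivl1[of 2 n] assms by auto
  have "k \<noteq> 0"
  proof
    assume "k = 0"
    with k(2) assms show False by simp
  qed
  with k show ?thesis by (intro that[of "k - 1"]) auto
qed

lemma one_minus_inverse_le_dyadic_pt:
  assumes "0 < n" "n < 2 ^ (m + 2)"
  shows "1 - 1 / real n \<le> dyadic_pt (Suc m)"
proof -
  have "real n < 2 ^ (m + 2)" using assms(2) by (metis of_nat_less_iff of_nat_numeral of_nat_power)
  with assms(1) show ?thesis by (simp add: dyadic_pt_Suc field_simps)
qed

locale doubling_weight =
  fixes v :: "real \<Rightarrow> real" and D :: real
  assumes ge_1: "\<And>r. r \<in> {0..<1} \<Longrightarrow> 1 \<le> v r"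
    and mono: "mono_on {0..<1} v"
    and cont: "continuous_on {0..<1} v"
    and D: "1 \<le> D"
    and doubling: "\<And>d. d \<in> {0<..1/2} \<Longrightarrow> v (1 - d) \<le> D * v (1 - 2 * d)"
begin

lemma integrator: "0 \<le> a \<Longrightarrow> a \<le> b \<Longrightarrow> b < 1 \<Longrightarrow> stieltjes_integrator v a b"
  by unfold_locales (auto intro: mono_on_subset[OF mono] continuous_on_subset[OF cont])

lemma v_le: "0 \<le> x \<Longrightarrow> x \<le> y \<Longrightarrow> y < 1 \<Longrightarrow> v x \<le> v y"
  by (rule mono_onD[OF mono]) auto

lemma integrand_continuous: "continuous_on {0..<1} (\<lambda>r. r ^ n / (v r)\<^sup>2)"
  using ge_1 by (intro continuous_intros cont) force

lemma integrand_nonneg: "r \<in> {0..<1} \<Longrightarrow> 0 \<le> r ^ n / (v r)\<^sup>2"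
  by simp

lemma doubling_dyadic_pt: "v (dyadic_pt (Suc j)) \<le> D * v (dyadic_pt j)"
proof -
  have "(1::real) \<le> 2 ^ (j + 1)" by (rule one_le_power) simp
  then have "v (1 - 1 / 2 ^ (j + 2)) \<le> D * v (1 - 2 * (1 / 2 ^ (j + 2)))"
    by (intro doubling) (auto simp: field_simps)
  then show ?thesis by (simp add: dyadic_pt_Suc dyadic_pt_def)
qed

lemma doubling_dyadic_pt_truncated:
  assumes "1/2 \<le> R" "R < 1"
  shows "v (min (dyadic_pt (Suc j)) R) \<le> D * v (min (dyadic_pt j) R)"
proof (cases "R \<le> dyadic_pt j")
  case True
  then have "R \<le> dyadic_pt (Suc j)" using monoD[OF mono_dyadic_pt, of j "Suc j"] by simp
  with True show ?thesis using ge_1[of R] assms D by (simp add: mult_le_cancel_right1)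
next
  case False
  have "v (min (dyadic_pt (Suc j)) R) \<le> v (dyadic_pt (Suc j))"
    using dyadic_pt_ge_half[of "Suc j"] dyadic_pt_lt_1[of "Suc j"] assms by (intro v_le) auto
  also have "\<dots> \<le> D * v (dyadic_pt j)" by (rule doubling_dyadic_pt)
  finally show ?thesis using False by simp
qed

lemma integrand_le_on_dyadic_cell:
  assumes R: "1/2 \<le> R" "R < 1"
    and x: "x \<in> {1/2..R}" "dyadic_pt j < x" "x \<le> dyadic_pt (Suc j)"
  shows "x ^ n / (v x)\<^sup>2 \<le> dyadic_pt (Suc j) ^ n / (v (min (dyadic_pt j) R))\<^sup>2"
proof (rule frac_le)
  have "1 \<le> v (min (dyadic_pt j) R)" using dyadic_pt_ge_half[of j] R by (intro ge_1) auto
  moreover have "v (min (dyadic_pt j) R) \<le> v x"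
    using x R(2) dyadic_pt_ge_half[of j] by (intro v_le) auto
  ultimately show "(v (min (dyadic_pt j) R))\<^sup>2 \<le> (v x)\<^sup>2" "0 < (v (min (dyadic_pt j) R))\<^sup>2"
    by (auto intro: power_mono)
  show "x ^ n \<le> dyadic_pt (Suc j) ^ n" using x by (intro power_mono) auto
qed (use dyadic_pt_ge_half[of "Suc j"] in simp)

lemma scale_comparison:
  assumes "0 < n" "n < 2 ^ (m + 2)"
  shows "v (1 - 1 / real n) \<le> D * v (dyadic_pt m)"
proof -
  have "v (1 - 1 / real n) \<le> v (dyadic_pt (Suc m))"
    using assms dyadic_pt_lt_1 by (intro v_le one_minus_inverse_le_dyadic_pt) auto
  also have "\<dots> \<le> D * v (dyadic_pt m)" by (rule doubling_dyadic_pt)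
  finally show ?thesis .
qed

(* The truncated moment over [1/2,R], for R beyond the dyadic scale m of n: compare the
   integrand with a step function on the dyadic cells and apply the discrete estimate. *)
lemma truncated_moment_bound_at_scale:
  assumes R: "dyadic_pt m \<le> R" "R < 1" and n: "2 ^ (m + 1) \<le> n"
  shows "stieltjes_int (\<lambda>r. r ^ n / (v r)\<^sup>2) v (1/2) R
           \<le> D * (1 + suminf (dyadic_weight D)) / v (dyadic_pt m)"
proof -
  let ?f = "\<lambda>r. r ^ n / (v r)\<^sup>2"
  define V where "V j = v (min (dyadic_pt j) R)" for j
  define w where "w j = dyadic_pt (Suc j) ^ n" for j
  have R1: "1/2 \<le> R" using dyadic_pt_ge_half[of m] R(1) by linarith
  interpret stieltjes_integrator v "1/2" R by (rule integrator) (use R1 R in auto)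
  obtain J where J: "m \<le> J" "R \<le> dyadic_pt J" using dyadic_pt_exhausts[OF R(2)] by blast
  have V_ge_1: "1 \<le> V j" for j
    unfolding V_def using dyadic_pt_ge_half[of j] R1 R(2) by (intro ge_1) auto
  have V_mono: "V j \<le> V (Suc j)" for j
    unfolding V_def using dyadic_pt_ge_half[of j] monoD[OF mono_dyadic_pt, of j "Suc j"] R1 R(2)
    by (intro v_le) auto
  have V_doubling: "V (Suc j) \<le> D * V j" for j
    unfolding V_def by (rule doubling_dyadic_pt_truncated[OF R1 R(2)])
  have w_decay: "j < m \<Longrightarrow> w j \<le> exp (- (2 ^ (m - Suc j)))" for j
    unfolding w_def by (rule dyadic_pt_power_decay[OF n])
  have w: "0 \<le> w j" "w j \<le> 1" for j
    unfolding w_def using dyadic_pt_ge_half[of "Suc j"] dyadic_pt_lt_1[of "Suc j"]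
    by (auto intro: power_le_one)
  have f_R: "continuous_on {1/2..R} ?f" "\<And>x. x \<in> {1/2..R} \<Longrightarrow> 0 \<le> ?f x"
    using R(2) by (auto intro: continuous_on_subset[OF integrand_continuous])
  have "stieltjes_int ?f v (1/2) R = enn2real (stieltjes_nn ?f v (1/2) R)"
    by (rule stieltjes_int_eq_nn[OF f_R])
  also have "\<dots> \<le> (\<Sum>j<J. w j / (V j)\<^sup>2 * (V (Suc j) - V j))"
  proof (rule enn2real_leI)
    show "0 \<le> (\<Sum>j<J. w j / (V j)\<^sup>2 * (V (Suc j) - V j))"
      using V_mono w by (intro sum_nonneg mult_nonneg_nonneg) auto
    show "stieltjes_nn ?f v (1/2) R \<le> ennreal (\<Sum>j<J. w j / (V j)\<^sup>2 * (V (Suc j) - V j))"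
      unfolding V_def
      by (rule stieltjes_nn_le_step_sum[where p=dyadic_pt])
         (use J(2) mono_dyadic_pt integrand_le_on_dyadic_cell[OF R1 R(2)] w in
           \<open>auto simp: V_def w_def\<close>)
  qed
  also have "\<dots> \<le> D * (1 + suminf (dyadic_weight D)) / V m"
    by (rule doubling_sum_bound[of D V w m J, OF D V_ge_1 V_mono V_doubling w w_decay J(1)])
  also have "V m = v (dyadic_pt m)" using R(1) by (simp add: V_def)
  finally show ?thesis .
qed

(* The uniform bound on all truncated moments: reduce to an upper limit beyond the scale
   of n by monotonicity, then pass from v(p_m) to v(1 - 1/n) by one more doubling step. *)
lemma truncated_moment_bound:
  assumes n: "2 \<le> n" and R: "R < 1"
  shows "stieltjes_int (\<lambda>r. r ^ n / (v r)\<^sup>2) v (1/2) R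
           \<le> D\<^sup>2 * (1 + suminf (dyadic_weight D)) / v (1 - 1 / real n)"
proof -
  let ?f = "\<lambda>r. r ^ n / (v r)\<^sup>2" and ?S = "suminf (dyadic_weight D)"
  obtain m where m: "2 ^ (m + 1) \<le> n" "n < 2 ^ (m + 2)" using dyadic_scale[OF n] by blast
  define R' where "R' = max R (dyadic_pt m)"
  have R': "dyadic_pt m \<le> R'" "R' < 1" using R dyadic_pt_lt_1[of m] by (auto simp: R'_def)
  have S: "0 \<le> 1 + ?S" using D by (intro add_nonneg_nonneg suminf_nonneg summable_dyadic_weight
      dyadic_weight_nonneg) auto
  have v_n: "1 \<le> v (1 - 1 / real n)" using n by (intro ge_1) auto
  have v_n_m: "v (1 - 1 / real n) \<le> D * v (dyadic_pt m)" using n m(2) by (intro scale_comparison) auto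
  have v_m: "0 < v (dyadic_pt m)" using ge_1[of "dyadic_pt m"] dyadic_pt_ge_half[of m] dyadic_pt_lt_1[of m]
    by auto
  have "D * (1 + ?S) / v (dyadic_pt m) = D\<^sup>2 * (1 + ?S) / (D * v (dyadic_pt m))"
    using D v_m by (simp add: power2_eq_square)
  also have "\<dots> \<le> D\<^sup>2 * (1 + ?S) / v (1 - 1 / real n)"
    using v_n_m v_n S by (intro divide_left_mono) auto
  finally have scale: "D * (1 + ?S) / v (dyadic_pt m) \<le> D\<^sup>2 * (1 + ?S) / v (1 - 1 / real n)" .
  show ?thesis
  proof (cases "R < 1/2")
    case True
    then show ?thesis using S v_n by (simp add: stieltjes_int_empty)
  next
    case False
    interpret stieltjes_integrator v "1/2" R' by (rule integrator) (use R' dyadic_pt_ge_half[of m] in auto)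
    have "stieltjes_int ?f v (1/2) R \<le> stieltjes_int ?f v (1/2) R'"
      using False R'(2) by (intro stieltjes_int_mono continuous_on_subset[OF integrand_continuous])
        (auto simp: R'_def)
    also have "\<dots> \<le> D * (1 + ?S) / v (dyadic_pt m)"
      by (rule truncated_moment_bound_at_scale[OF R' m(1)])
    finally show ?thesis using scale by linarith
  qed
qed

end

theorem mainTheorem10:
  fixes D :: real
  assumes "D \<ge> 1"
  shows "\<exists>C::real. \<exists>n0::nat. \<forall>v :: real \<Rightarrow> real.
    ((\<forall>r\<in>{0..<1}. v r \<ge> 1) \<and> mono_on {0..<1} v \<and> continuous_on {0..<1} v \<and> v 0 = 1 \<and>
     filterlim v at_top (at_left 1) \<and>
     (\<forall>d\<in>{0<..1/2}. v (1 - d) \<le> D * v (1 - 2 * d)))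
    \<longrightarrow> (\<forall>n::nat. n \<ge> 1 \<and> n \<ge> n0 \<longrightarrow>
          stieltjes_int_to1 (\<lambda>r. r ^ n / (v r)\<^sup>2) v (1/2)
            \<le> C / v (1 - 1 / real n))"
proof (intro exI[of _ "D\<^sup>2 * (1 + suminf (dyadic_weight D))"] exI[of _ "2::nat"] allI impI)
  fix v :: "real \<Rightarrow> real" and n :: nat
  assume "(\<forall>r\<in>{0..<1}. v r \<ge> 1) \<and> mono_on {0..<1} v \<and> continuous_on {0..<1} v \<and> v 0 = 1 \<and>
     filterlim v at_top (at_left 1) \<and> (\<forall>d\<in>{0<..1/2}. v (1 - d) \<le> D * v (1 - 2 * d))"
  then interpret doubling_weight v D using assms by unfold_locales auto
  assume "n \<ge> 1 \<and> n \<ge> 2"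
  then show "stieltjes_int_to1 (\<lambda>r. r ^ n / (v r)\<^sup>2) v (1/2)
      \<le> D\<^sup>2 * (1 + suminf (dyadic_weight D)) / v (1 - 1 / real n)"
    by (intro stieltjes_int_to1_le truncated_moment_bound integrand_nonneg
        mono_on_subset[OF mono] continuous_on_subset[OF cont] continuous_on_subset[OF integrand_continuous])
       auto
qed

end
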